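(* For any graphs $G$ and $H$, $\chi_{lc}(G\,\square\, H)=\max\{\chi_{lc}(G),\chi_{lc}(H)\}$.
   Context: Graphs are finite, loopless, with symmetric edge sets; write $v\sim w$ for adjacency and $K_c$ for the complete graph on $c$ vertices. The Cartesian product $G\,\square\,H$ has vertex set $V(G)\times V(H)$ with $(v,x)\sim(w,y)$ iff ($v=w$ and $x\sim y$) or ($v\sim w$ and $x=y$). For graphs $G,H$, $\mathcal A_{lc}(G,H)$ is the unital complex algebra generated by $e_{v,x}$ ($v\in V(G)$, $x\in V(H)$) with relations: $\sum_{x}e_{v,x}=1$; $e_{v,x}^2=e_{v,x}$; $e_{v,x}e_{v,y}=0$ for $x\ne y$; $e_{v,x}e_{w,y}=0$ if $v\sim w$ and $x\not\sim y$; $e_{v,x}e_{w,y}=e_{w,y}e_{v,x}$ if $v\sim w$. $\chi_{lc}(G)=\min\{c:\mathcal A_{lc}(G,K_c)\ne0\}$. *)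

theory Defs
  imports Complex_Main
begin

definition is_graph :: "'a set \<Rightarrow> ('a \<Rightarrow> 'a \<Rightarrow> bool) \<Rightarrow> bool" where
  "is_graph V E \<longleftrightarrow> finite V \<and> (\<forall>v w. E v w \<longrightarrow> v \<in> V \<and> w \<in> V)
     \<and> (\<forall>v w. E v w \<longrightarrow> E w v) \<and> (\<forall>v. \<not> E v v)"

definition cart_V :: "'a set \<Rightarrow> 'b set \<Rightarrow> ('a \<times> 'b) set" where
  "cart_V VG VH = VG \<times> VH"

definition cart_E :: "('a \<Rightarrow> 'a \<Rightarrow> bool) \<Rightarrow> ('b \<Rightarrow> 'b \<Rightarrow> bool)
    \<Rightarrow> ('a \<times> 'b) \<Rightarrow> ('a \<times> 'b) \<Rightarrow> bool" where
  "cart_E EG EH p q \<longleftrightarrow>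
     (fst p = fst q \<and> EH (snd p) (snd q)) \<or> (EG (fst p) (fst q) \<and> snd p = snd q)"

definition K_V :: "nat \<Rightarrow> nat set" where "K_V c = {..<c}"
definition K_E :: "nat \<Rightarrow> nat \<Rightarrow> nat \<Rightarrow> bool" where
  "K_E c x y \<longleftrightarrow> x < c \<and> y < c \<and> x \<noteq> y"

text \<open>Free unital complex algebra on a generator alphabet 'g: noncommutative
  polynomials, represented as coefficient functions on words (finitely supported
  by construction below).\<close>
type_synonym 'g ncpoly = "'g list \<Rightarrow> complex"

definition mono :: "'g list \<Rightarrow> 'g ncpoly" where
  "mono u = (\<lambda>t. if t = u then 1 else 0)"

text \<open>The element u * p * w of the free algebra, for words u, w.\<close>
definition sandwich :: "'g list \<Rightarrow> 'g ncpoly \<Rightarrow> 'g list \<Rightarrow> 'g ncpoly" where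
  "sandwich u p w = (\<lambda>t. if (\<exists>m. t = u @ m @ w)
      then p (take (length t - length u - length w) (drop (length u) t)) else 0)"

text \<open>Defining relations of A_lc(G,H), as elements r of the free algebra on the
  generators e_(v,x), v in V(G), x in V(H) (relation: r = 0).\<close>
inductive_set lc_rels :: "'a set \<Rightarrow> ('a \<Rightarrow> 'a \<Rightarrow> bool) \<Rightarrow> 'b set \<Rightarrow> ('b \<Rightarrow> 'b \<Rightarrow> bool)
    \<Rightarrow> ('a \<times> 'b) ncpoly set"
  for VG EG VH EH where
  sum_one: "v \<in> VG \<Longrightarrow> (\<lambda>t. (\<Sum>x\<in>VH. mono [(v,x)] t) - mono [] t) \<in> lc_rels VG EG VH EH"
| idem: "v \<in> VG \<Longrightarrow> x \<in> VH \<Longrightarrow>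
    (\<lambda>t. mono [(v,x),(v,x)] t - mono [(v,x)] t) \<in> lc_rels VG EG VH EH"
| orth: "v \<in> VG \<Longrightarrow> x \<in> VH \<Longrightarrow> y \<in> VH \<Longrightarrow> x \<noteq> y \<Longrightarrow>
    mono [(v,x),(v,y)] \<in> lc_rels VG EG VH EH"
| hom: "v \<in> VG \<Longrightarrow> w \<in> VG \<Longrightarrow> x \<in> VH \<Longrightarrow> y \<in> VH \<Longrightarrow> EG v w \<Longrightarrow> \<not> EH x y \<Longrightarrow>
    mono [(v,x),(w,y)] \<in> lc_rels VG EG VH EH"
| comm: "v \<in> VG \<Longrightarrow> w \<in> VG \<Longrightarrow> x \<in> VH \<Longrightarrow> y \<in> VH \<Longrightarrow> EG v w \<Longrightarrow>
    (\<lambda>t. mono [(v,x),(w,y)] t - mono [(w,y),(v,x)] t) \<in> lc_rels VG EG VH EH"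

text \<open>The two-sided ideal of the free algebra generated by the relations
  (= linear span of all u * r * w with u, w words in the generators).\<close>
inductive_set lc_ideal :: "'a set \<Rightarrow> ('a \<Rightarrow> 'a \<Rightarrow> bool) \<Rightarrow> 'b set \<Rightarrow> ('b \<Rightarrow> 'b \<Rightarrow> bool)
    \<Rightarrow> ('a \<times> 'b) ncpoly set"
  for VG EG VH EH where
  zero: "(\<lambda>t. 0) \<in> lc_ideal VG EG VH EH"
| gen: "r \<in> lc_rels VG EG VH EH \<Longrightarrow> set u \<subseteq> VG \<times> VH \<Longrightarrow> set w \<subseteq> VG \<times> VH \<Longrightarrow>
    sandwich u r w \<in> lc_ideal VG EG VH EH"
| add: "p \<in> lc_ideal VG EG VH EH \<Longrightarrow> q \<in> lc_ideal VG EG VH EH \<Longrightarrow>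
    (\<lambda>t. p t + q t) \<in> lc_ideal VG EG VH EH"
| smult: "p \<in> lc_ideal VG EG VH EH \<Longrightarrow> (\<lambda>t. c * p t) \<in> lc_ideal VG EG VH EH"

text \<open>A_lc(G,H) is nonzero iff 1 is not in the defining ideal.\<close>
definition lc_nonzero :: "'a set \<Rightarrow> ('a \<Rightarrow> 'a \<Rightarrow> bool) \<Rightarrow> 'b set \<Rightarrow> ('b \<Rightarrow> 'b \<Rightarrow> bool) \<Rightarrow> bool" where
  "lc_nonzero VG EG VH EH \<longleftrightarrow> mono [] \<notin> lc_ideal VG EG VH EH"

definition chi_lc :: "'a set \<Rightarrow> ('a \<Rightarrow> 'a \<Rightarrow> bool) \<Rightarrow> nat" where
  "chi_lc V E = (LEAST c. lc_nonzero V E (K_V c) (K_E c))"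

end

theory Submission
  imports Defs "HOL-Library.Function_Algebras"
begin

text \<open>
  \<open>\<A>\<^sub>l\<^sub>c(G, K\<^sub>c) \<noteq> 0\<close> iff some linear functional on the free algebra is 1 on 1 and vanishes on
  the defining ideal; such a functional is determined by its values \<open>\<psi>\<close> on words, and the
  relations become identities for \<open>\<psi>\<close> inside arbitrary words.
  These functionals pull back along graph homomorphisms, e.g. the inclusions of \<open>G\<close> and \<open>H\<close>
  as fibres of \<open>G \<box> H\<close>, and extend by zero to more colours; this gives
  \<open>\<chi>\<^sub>l\<^sub>c(G \<box> H) \<ge> max\<close>. Conversely, functionals for \<open>G\<close> and \<open>H\<close> with the same number \<open>c\<close> of
  colours combine into one for \<open>G \<box> H\<close> through
  \<open>e\<^sub>(\<^sub>g\<^sub>,\<^sub>h\<^sub>)\<^sub>,\<^sub>x \<mapsto> \<Sum>\<^sub>y e\<^sub>g\<^sub>,\<^sub>y \<otimes> e\<^sub>h\<^sub>,\<^sub>x\<^sub>-\<^sub>y\<close> (colours mod \<open>c\<close>): summing over \<open>x\<close>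
  uses that \<open>y \<mapsto> x - y\<close> is a bijection, and since an edge of \<open>G \<box> H\<close> is an edge in one
  coordinate and an equality in the other, each forbidden pattern of the product forces a
  forbidden pattern in one of the factors.
\<close>

section \<open>Functionals vanishing on the defining ideal\<close>

text \<open>A functional \<open>\<psi>\<close> on words over the generators \<open>e\<^sub>v\<^sub>,\<^sub>x\<close> whose linear extension is 1 on 1 and
  vanishes on the ideal of the relations of \<open>\<A>\<^sub>l\<^sub>c(V, K\<^sub>c)\<close>.\<close>
locale lc_functional =
  fixes V :: "'a set" and E :: "'a \<Rightarrow> 'a \<Rightarrow> bool" and c :: nat
    and \<psi> :: "('a \<times> nat) list \<Rightarrow> complex"
  assumes empty_word: "\<psi> [] = 1"
    and sum_colours: "set u \<subseteq> V \<times> {..<c} \<Longrightarrow> set w \<subseteq> V \<times> {..<c} \<Longrightarrow> v \<in> V \<Longrightarrow>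
      (\<Sum>x<c. \<psi> (u @ (v, x) # w)) = \<psi> (u @ w)"
    and orthogonal: "set u \<subseteq> V \<times> {..<c} \<Longrightarrow> set w \<subseteq> V \<times> {..<c} \<Longrightarrow> v \<in> V \<Longrightarrow>
      x < c \<Longrightarrow> y < c \<Longrightarrow> x \<noteq> y \<Longrightarrow> \<psi> (u @ (v, x) # (v, y) # w) = 0"
    and adj_same_colour: "set u \<subseteq> V \<times> {..<c} \<Longrightarrow> set w \<subseteq> V \<times> {..<c} \<Longrightarrow>
      v \<in> V \<Longrightarrow> v' \<in> V \<Longrightarrow> E v v' \<Longrightarrow> x < c \<Longrightarrow> \<psi> (u @ (v, x) # (v', x) # w) = 0"
    and adj_comm: "set u \<subseteq> V \<times> {..<c} \<Longrightarrow> set w \<subseteq> V \<times> {..<c} \<Longrightarrow>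
      v \<in> V \<Longrightarrow> v' \<in> V \<Longrightarrow> E v v' \<Longrightarrow> x < c \<Longrightarrow> y < c \<Longrightarrow>
      \<psi> (u @ (v, x) # (v', y) # w) = \<psi> (u @ (v', y) # (v, x) # w)"
begin

lemma idempotent:
  assumes "set u \<subseteq> V \<times> {..<c}" "set w \<subseteq> V \<times> {..<c}" "v \<in> V" "x < c"
  shows "\<psi> (u @ (v, x) # (v, x) # w) = \<psi> (u @ (v, x) # w)"
proof -
  have "\<psi> (u @ (v, x) # w) = (\<Sum>y<c. \<psi> ((u @ [(v, x)]) @ (v, y) # w))"
    using sum_colours[of "u @ [(v, x)]" w v] assms by simp
  also have "\<dots> = (\<Sum>y<c. if y = x then \<psi> (u @ (v, x) # (v, x) # w) else 0)"
    using orthogonal[OF assms(1-3) assms(4)] by (intro sum.cong) auto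
  finally show ?thesis using assms(4) by simp
qed

lemma clash:
  assumes "set u \<subseteq> V \<times> {..<c}" "set w \<subseteq> V \<times> {..<c}" "v \<in> V" "v' \<in> V" "x < c" "y < c"
    and "(v = v' \<and> x \<noteq> y) \<or> (E v v' \<and> x = y)"
  shows "\<psi> (u @ (v, x) # (v', y) # w) = 0"
  using assms orthogonal adj_same_colour by blast

lemma comm_if_eq_or_adj:
  assumes "set u \<subseteq> V \<times> {..<c}" "set w \<subseteq> V \<times> {..<c}" "v \<in> V" "v' \<in> V" "x < c" "y < c"
    and "v = v' \<or> E v v'"
  shows "\<psi> (u @ (v, x) # (v', y) # w) = \<psi> (u @ (v', y) # (v, x) # w)"
  using assms adj_comm[OF assms(1-4) _ assms(5,6)] clash[OF assms(1-3,3) assms(5,6)]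
    clash[OF assms(1-3,3) assms(6,5)] by (cases "x = y") auto

end

definition fin_supp :: "'g ncpoly \<Rightarrow> bool" where
  "fin_supp p \<longleftrightarrow> finite {t. p t \<noteq> 0}"

definition lin_ext :: "('g list \<Rightarrow> complex) \<Rightarrow> 'g ncpoly \<Rightarrow> complex" where
  "lin_ext \<psi> p = (\<Sum>t | p t \<noteq> 0. p t * \<psi> t)"

lemma fin_supp_mono [simp]: "fin_supp (Defs.mono m)"
  by (simp add: fin_supp_def Defs.mono_def)

lemma fin_supp_add [simp]: "fin_supp p \<Longrightarrow> fin_supp q \<Longrightarrow> fin_supp (\<lambda>t. p t + q t)"
  unfolding fin_supp_def by (rule finite_subset[of _ "{t. p t \<noteq> 0} \<union> {t. q t \<noteq> 0}"]) auto

lemma fin_supp_diff [simp]: "fin_supp p \<Longrightarrow> fin_supp q \<Longrightarrow> fin_supp (\<lambda>t. p t - q t)"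
  unfolding fin_supp_def by (rule finite_subset[of _ "{t. p t \<noteq> 0} \<union> {t. q t \<noteq> 0}"]) auto

lemma fin_supp_smult [simp]: "fin_supp p \<Longrightarrow> fin_supp (\<lambda>t. a * p t)"
  unfolding fin_supp_def by (rule finite_subset[of _ "{t. p t \<noteq> 0}"]) auto

lemma fin_supp_sum [simp]: "(\<And>x. x \<in> X \<Longrightarrow> fin_supp (f x)) \<Longrightarrow> fin_supp (\<lambda>t. \<Sum>x\<in>X. f x t)"
proof (induction X rule: infinite_finite_induct)
  case (infinite X)
  then show ?case by (simp add: fin_supp_def)
next
  case empty
  then show ?case by (simp add: fin_supp_def)
next
  case (insert x X)
  then show ?case using fin_supp_add[of "f x" "\<lambda>t. \<Sum>x\<in>X. f x t"] by simp
qed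

lemma lin_ext_eq_sum:
  "finite S \<Longrightarrow> {t. p t \<noteq> 0} \<subseteq> S \<Longrightarrow> lin_ext \<psi> p = (\<Sum>t\<in>S. p t * \<psi> t)"
  unfolding lin_ext_def by (rule sum.mono_neutral_left) auto

lemma lin_ext_mono [simp]: "lin_ext \<psi> (Defs.mono m) = \<psi> m"
  by (subst lin_ext_eq_sum[of "{m}"]) (auto simp: Defs.mono_def)

lemma lin_ext_add:
  assumes "fin_supp p" "fin_supp q"
  shows "lin_ext \<psi> (\<lambda>t. p t + q t) = lin_ext \<psi> p + lin_ext \<psi> q"
proof -
  let ?S = "{t. p t \<noteq> 0} \<union> {t. q t \<noteq> 0}"
  have "finite ?S" using assms by (simp add: fin_supp_def)
  then show ?thesis
    by (subst (1 2 3) lin_ext_eq_sum[of ?S]) (auto simp: distrib_right sum.distrib)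
qed

lemma lin_ext_smult: "lin_ext \<psi> (\<lambda>t. a * p t) = a * lin_ext \<psi> p"
  by (cases "a = 0") (simp_all add: lin_ext_def sum_distrib_left mult.assoc)

lemma lin_ext_diff:
  assumes "fin_supp p" "fin_supp q"
  shows "lin_ext \<psi> (\<lambda>t. p t - q t) = lin_ext \<psi> p - lin_ext \<psi> q"
proof -
  let ?S = "{t. p t \<noteq> 0} \<union> {t. q t \<noteq> 0}"
  have "finite ?S" using assms by (simp add: fin_supp_def)
  then show ?thesis
    by (subst (1 2 3) lin_ext_eq_sum[of ?S]) (auto simp: left_diff_distrib sum_subtractf)
qed

lemma lin_ext_sum:
  "(\<And>x. x \<in> X \<Longrightarrow> fin_supp (f x)) \<Longrightarrow> lin_ext \<psi> (\<lambda>t. \<Sum>x\<in>X. f x t) = (\<Sum>x\<in>X. lin_ext \<psi> (f x))"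
proof (induction X rule: infinite_finite_induct)
  case (insert x X)
  then show ?case using lin_ext_add[of "f x" "\<lambda>t. \<Sum>x\<in>X. f x t" \<psi>] by simp
qed (simp_all add: lin_ext_def)

lemma sandwich_append [simp]: "sandwich u p w (u @ m @ w) = p m"
  by (simp add: sandwich_def)

lemma lin_ext_sandwich:
  assumes "fin_supp r"
  shows "fin_supp (sandwich u r w) \<and> lin_ext \<psi> (sandwich u r w) = lin_ext (\<lambda>m. \<psi> (u @ m @ w)) r"
proof -
  let ?S = "{m. r m \<noteq> 0}"
  have supp: "{t. sandwich u r w t \<noteq> 0} \<subseteq> (\<lambda>m. u @ m @ w) ` ?S"
    by (auto simp: sandwich_def)
  have fin: "finite ?S" using assms by (simp add: fin_supp_def)
  have "inj_on (\<lambda>m. u @ m @ w) ?S" by (auto simp: inj_on_def)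
  then have "lin_ext \<psi> (sandwich u r w) = lin_ext (\<lambda>m. \<psi> (u @ m @ w)) r"
    using fin by (simp add: lin_ext_eq_sum[OF _ supp] lin_ext_eq_sum[of ?S] sum.reindex)
  then show ?thesis using fin finite_subset[OF supp] by (simp add: fin_supp_def)
qed

lemma (in lc_functional) lin_ext_lc_rels:
  assumes "r \<in> lc_rels V E (K_V c) (K_E c)" "set u \<subseteq> V \<times> {..<c}" "set w \<subseteq> V \<times> {..<c}"
  shows "fin_supp r \<and> lin_ext (\<lambda>m. \<psi> (u @ m @ w)) r = 0"
  using assms(1)
proof cases
  case (sum_one v)
  then show ?thesis
    using sum_colours[OF assms(2,3)] by (simp add: lin_ext_diff lin_ext_sum K_V_def)
next
  case (idem v x)
  then show ?thesis using idempotent[OF assms(2,3)] by (simp add: lin_ext_diff K_V_def)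
next
  case (orth v x y)
  then show ?thesis using orthogonal[OF assms(2,3)] by (simp add: K_V_def)
next
  case (hom v v' x y)
  then show ?thesis using adj_same_colour[OF assms(2,3)] by (auto simp: K_V_def K_E_def)
next
  case (comm v v' x y)
  then show ?thesis using adj_comm[OF assms(2,3)] by (simp add: lin_ext_diff K_V_def)
qed

lemma (in lc_functional) lin_ext_lc_ideal:
  "p \<in> lc_ideal V E (K_V c) (K_E c) \<Longrightarrow> fin_supp p \<and> lin_ext \<psi> p = 0"
proof (induction rule: lc_ideal.induct)
  case zero
  then show ?case by (simp add: fin_supp_def lin_ext_def)
next
  case (gen r u w)
  then show ?case using lin_ext_lc_rels lin_ext_sandwich by (metis K_V_def)
next
  case (add p q)
  then show ?case by (simp add: lin_ext_add)
next
  case (smult p a)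
  then show ?case by (simp add: lin_ext_smult)
qed

lemma lc_nonzero_if_functional:
  assumes "lc_functional V E c \<psi>"
  shows "lc_nonzero V E (K_V c) (K_E c)"
  using lc_functional.lin_ext_lc_ideal[OF assms, of "Defs.mono []"]
    lc_functional.empty_word[OF assms] by (auto simp: lc_nonzero_def)

lemma sum_fun_apply: "(\<Sum>x\<in>X. f x) t = (\<Sum>x\<in>X. f x t)"
  by (induction X rule: infinite_finite_induct) auto

lemma sandwich_mono: "sandwich u (Defs.mono m) w = Defs.mono (u @ m @ w)"
  by (auto simp: sandwich_def Defs.mono_def fun_eq_iff)

lemma sandwich_diff: "sandwich u (\<lambda>t. p t - q t) w = sandwich u p w - sandwich u q w"
  by (auto simp: sandwich_def fun_eq_iff)

lemma sandwich_sum: "sandwich u (\<lambda>t. \<Sum>x\<in>X. f x t) w = (\<Sum>x\<in>X. sandwich u (f x) w)"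
  by (auto simp: sandwich_def fun_eq_iff sum_fun_apply)

text \<open>If 1 is not in the ideal, a basis of the ideal extends, together with 1, to a linearly
  independent set, so some linear functional is 1 on 1 and vanishes on the ideal.\<close>
lemma functional_if_lc_nonzero:
  fixes V :: "'a set"
  assumes "lc_nonzero V E (K_V c) (K_E c)"
  shows "\<exists>\<psi>. lc_functional V E c \<psi>"
proof -
  let ?I = "lc_ideal V E (K_V c) (K_E c)"
  let ?scale = "\<lambda>a (p :: ('a \<times> nat) ncpoly) t. a * p t"
  interpret vs: vector_space_pair ?scale "(*) :: complex \<Rightarrow> complex \<Rightarrow> complex"
    by unfold_locales (auto simp: fun_eq_iff algebra_simps)
  have "vs.vs1.subspace ?I"
    unfolding vs.vs1.subspace_def zero_fun_def plus_fun_def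
    using lc_ideal.zero lc_ideal.add lc_ideal.smult by blast
  moreover obtain B where B: "B \<subseteq> ?I" "vs.vs1.independent B" "?I \<subseteq> vs.vs1.span B"
    by (rule vs.vs1.basis_exists)
  ultimately have span_B: "vs.vs1.span B = ?I"
    using vs.vs1.span_minimal[OF B(1)] by (intro equalityI) simp_all
  have one: "Defs.mono [] \<notin> ?I" using assms by (simp add: lc_nonzero_def)
  have "vs.vs1.independent (insert (Defs.mono []) B)"
    using one B(2) span_B by (intro vs.vs1.independent_insertI) simp_all
  from vs.linear_independent_extend[OF this, of "\<lambda>p. if p = Defs.mono [] then 1 else 0"]
  obtain g where g: "Vector_Spaces.linear ?scale (*) g"
      "\<forall>p\<in>insert (Defs.mono []) B. g p = (if p = Defs.mono [] then 1 else 0)"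
    by blast
  interpret g: Vector_Spaces.linear ?scale "(*)" g by (rule g(1))
  have "vs.vs1.span B \<subseteq> {p. g p = 0}"
    using g(2) B(1) one by (intro vs.vs1.span_minimal g.subspace_kernel) auto
  then have kill: "g (sandwich u r w) = 0"
    if "r \<in> lc_rels V E (K_V c) (K_E c)" "set u \<subseteq> V \<times> {..<c}" "set w \<subseteq> V \<times> {..<c}" for r u w
    using lc_ideal.gen[OF that[unfolded K_V_def[symmetric]]] span_B by auto
  have "lc_functional V E c (\<lambda>t. g (Defs.mono t))"
  proof
    show "g (Defs.mono []) = 1" using g(2) by simp
  next
    fix u w v assume uw: "set u \<subseteq> V \<times> {..<c}" "set w \<subseteq> V \<times> {..<c}" and "v \<in> V"
    have "g (sandwich u (\<lambda>t. (\<Sum>x\<in>K_V c. Defs.mono [(v, x)] t) - Defs.mono [] t) w) = 0"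
      using \<open>v \<in> V\<close> by (intro kill[OF _ uw] lc_rels.intros)
    then show "(\<Sum>x<c. g (Defs.mono (u @ (v, x) # w))) = g (Defs.mono (u @ w))"
      by (simp add: sandwich_diff sandwich_sum sandwich_mono g.diff g.sum K_V_def)
  next
    fix u w v x y assume uw: "set u \<subseteq> V \<times> {..<c}" "set w \<subseteq> V \<times> {..<c}"
      and "v \<in> V" "x < c" "y < c" "x \<noteq> y"
    then have "g (sandwich u (Defs.mono [(v, x), (v, y)]) w) = 0"
      by (intro kill[OF _ uw] lc_rels.intros) (simp_all add: K_V_def)
    then show "g (Defs.mono (u @ (v, x) # (v, y) # w)) = 0"
      by (simp add: sandwich_mono)
  next
    fix u w v v' x assume uw: "set u \<subseteq> V \<times> {..<c}" "set w \<subseteq> V \<times> {..<c}"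
      and "v \<in> V" "v' \<in> V" "E v v'" "x < c"
    then have "g (sandwich u (Defs.mono [(v, x), (v', x)]) w) = 0"
      by (intro kill[OF _ uw] lc_rels.intros) (simp_all add: K_V_def K_E_def)
    then show "g (Defs.mono (u @ (v, x) # (v', x) # w)) = 0"
      by (simp add: sandwich_mono)
  next
    fix u w v v' x y assume uw: "set u \<subseteq> V \<times> {..<c}" "set w \<subseteq> V \<times> {..<c}"
      and "v \<in> V" "v' \<in> V" "E v v'" "x < c" "y < c"
    then have "g (sandwich u (\<lambda>t. Defs.mono [(v, x), (v', y)] t - Defs.mono [(v', y), (v, x)] t) w) = 0"
      by (intro kill[OF _ uw] lc_rels.intros) (simp_all add: K_V_def)
    then show "g (Defs.mono (u @ (v, x) # (v', y) # w)) = g (Defs.mono (u @ (v', y) # (v, x) # w))"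
      by (simp add: sandwich_diff sandwich_mono g.diff)
  qed
  then show ?thesis by blast
qed

lemma lc_nonzero_iff_functional:
  "lc_nonzero V E (K_V c) (K_E c) \<longleftrightarrow> (\<exists>\<psi>. lc_functional V E c \<psi>)"
  using functional_if_lc_nonzero lc_nonzero_if_functional by blast

section \<open>Changing the graph and the number of colours\<close>

lemma lc_functional_mono_colours:
  assumes "lc_functional V E c \<psi>" "c \<le> d"
  shows "lc_functional V E d (\<lambda>t. if snd ` set t \<subseteq> {..<c} then \<psi> t else 0)"
proof -
  interpret lc_functional V E c \<psi> by (rule assms(1))
  have restrict: "set t \<subseteq> V \<times> {..<c}" if "set t \<subseteq> V \<times> {..<d}" "snd ` set t \<subseteq> {..<c}" for t
    using that by fastforce
  show ?thesis
  proof
    fix u w v assume uw: "set u \<subseteq> V \<times> {..<d}" "set w \<subseteq> V \<times> {..<d}" and "v \<in> V"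
    show "(\<Sum>x<d. if snd ` set (u @ (v, x) # w) \<subseteq> {..<c} then \<psi> (u @ (v, x) # w) else 0) =
        (if snd ` set (u @ w) \<subseteq> {..<c} then \<psi> (u @ w) else 0)"
    proof (cases "snd ` set (u @ w) \<subseteq> {..<c}")
      case True
      have "(\<Sum>x<d. if snd ` set (u @ (v, x) # w) \<subseteq> {..<c} then \<psi> (u @ (v, x) # w) else 0) =
          (\<Sum>x<d. if x < c then \<psi> (u @ (v, x) # w) else 0)"
        using True by (intro sum.cong) auto
      also have "\<dots> = (\<Sum>x<c. \<psi> (u @ (v, x) # w))"
      proof -
        have "{..<d} \<inter> {x. x < c} = {..<c}" using \<open>c \<le> d\<close> by auto
        then show ?thesis by (simp add: sum.If_cases)
      qed
      finally show ?thesis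
        using True sum_colours[OF restrict[OF uw(1)] restrict[OF uw(2)] \<open>v \<in> V\<close>] by (simp add: image_Un)
    qed auto
  qed (use assms restrict in \<open>auto intro!: empty_word orthogonal adj_same_colour adj_comm\<close>)
qed

lemma lc_functional_colouring:
  assumes "\<And>v. v \<in> V \<Longrightarrow> f v < c" and "\<And>v v'. v \<in> V \<Longrightarrow> v' \<in> V \<Longrightarrow> E v v' \<Longrightarrow> f v \<noteq> f v'"
  shows "lc_functional V E c (\<lambda>t. if \<forall>(v, x)\<in>set t. x = f v then 1 else 0)"
proof
  fix u w v assume "v \<in> V"
  then have "(\<Sum>x<c. if \<forall>(v', x')\<in>set (u @ (v, x) # w). x' = f v' then 1 else 0) =
      (\<Sum>x<c. if x = f v then (if \<forall>(v', x')\<in>set (u @ w). x' = f v' then 1 else 0) else 0 :: complex)"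
    by (intro sum.cong) auto
  also have "\<dots> = (if \<forall>(v', x')\<in>set (u @ w). x' = f v' then 1 else 0)"
    using assms(1) \<open>v \<in> V\<close> by simp
  finally show "(\<Sum>x<c. if \<forall>(v', x')\<in>set (u @ (v, x) # w). x' = f v' then 1 else 0) =
      (if \<forall>(v', x')\<in>set (u @ w). x' = f v' then 1 else 0 :: complex)" .
qed (auto dest: assms(2))

lemma ex_lc_functional:
  assumes "finite V" "\<And>v. \<not> E v v"
  shows "\<exists>c \<psi>. lc_functional V E c \<psi>"
proof -
  obtain f where "bij_betw f V {..<card V}"
    using ex_bij_betw_finite_nat[OF assms(1)] atLeast0LessThan by auto
  then have "lc_functional V E (card V) (\<lambda>t. if \<forall>(v, x)\<in>set t. x = f v then 1 else 0)"
    using assms(2) by (intro lc_functional_colouring) (auto simp: bij_betw_def inj_on_def)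
  then show ?thesis by blast
qed

lemma lc_functional_pullback:
  assumes "lc_functional V E c \<psi>" "f ` V' \<subseteq> V"
    and "\<And>v v'. v \<in> V' \<Longrightarrow> v' \<in> V' \<Longrightarrow> E' v v' \<Longrightarrow> E (f v) (f v')"
  shows "lc_functional V' E' c (\<lambda>t. \<psi> (map (apfst f) t))"
proof -
  interpret lc_functional V E c \<psi> by (rule assms(1))
  have words: "set (map (apfst f) t) \<subseteq> V \<times> {..<c}" if "set t \<subseteq> V' \<times> {..<c}" for t
    using that assms(2) by (auto simp: apfst_def map_prod_def)
  show ?thesis
  proof
    fix u w v assume "set u \<subseteq> V' \<times> {..<c}" "set w \<subseteq> V' \<times> {..<c}" "v \<in> V'"
    then show "(\<Sum>x<c. \<psi> (map (apfst f) (u @ (v, x) # w))) = \<psi> (map (apfst f) (u @ w))"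
      using sum_colours[OF words words] assms(2) by auto
  next
    fix u w v x y assume "set u \<subseteq> V' \<times> {..<c}" "set w \<subseteq> V' \<times> {..<c}" "v \<in> V'"
      "x < c" "y < c" "x \<noteq> y"
    then show "\<psi> (map (apfst f) (u @ (v, x) # (v, y) # w)) = 0"
      using orthogonal[OF words words] assms(2) by auto
  next
    fix u w v v' x assume "set u \<subseteq> V' \<times> {..<c}" "set w \<subseteq> V' \<times> {..<c}" "v \<in> V'" "v' \<in> V'"
      "E' v v'" "x < c"
    then show "\<psi> (map (apfst f) (u @ (v, x) # (v', x) # w)) = 0"
      using adj_same_colour[OF words words] assms(2,3) by (auto simp: image_subset_iff)
  next
    fix u w v v' x y assume "set u \<subseteq> V' \<times> {..<c}" "set w \<subseteq> V' \<times> {..<c}" "v \<in> V'" "v' \<in> V'"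
      "E' v v'" "x < c" "y < c"
    then show "\<psi> (map (apfst f) (u @ (v, x) # (v', y) # w)) =
        \<psi> (map (apfst f) (u @ (v', y) # (v, x) # w))"
      using adj_comm[OF words words] assms(2,3) by (auto simp: image_subset_iff)
  qed (simp add: empty_word)
qed

section \<open>The product functional\<close>

text \<open>\<open>x - y\<close> modulo \<open>c\<close>; the truncated subtraction \<open>c - y\<close> makes this correct only for \<open>y \<le> c\<close>.\<close>
definition sub_mod :: "nat \<Rightarrow> nat \<Rightarrow> nat \<Rightarrow> nat" where
  "sub_mod c x y = (x + (c - y)) mod c"

lemma int_sub_mod: "y \<le> c \<Longrightarrow> int (sub_mod c x y) = (int x - int y) mod int c"
proof -
  assume "y \<le> c"
  then have "int (sub_mod c x y) = (int x - int y + int c) mod int c"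
    by (simp add: sub_mod_def zmod_int of_nat_diff algebra_simps)
  then show ?thesis by simp
qed

lemma sub_mod_less: "x < c \<Longrightarrow> sub_mod c x y < c"
  by (simp add: sub_mod_def)

lemma sub_mod_inj_left:
  assumes "x < c" "x' < c" "y \<le> c" "sub_mod c x y = sub_mod c x' y"
  shows "x = x'"
proof -
  have "(int x - int y) mod int c = (int x' - int y) mod int c"
    using assms(3,4) by (metis int_sub_mod)
  then have "(int x - int y + int y) mod int c = (int x' - int y + int y) mod int c"
    by (rule mod_add_cong) simp
  then show ?thesis using assms(1,2) by simp
qed

lemma sub_mod_inj_right:
  assumes "y < c" "y' < c" "sub_mod c x y = sub_mod c x y'"
  shows "y = y'"
proof -
  have "(int x - int y) mod int c = (int x - int y') mod int c"
    using assms by (metis int_sub_mod less_imp_le)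
  then have "(int x - (int x - int y)) mod int c = (int x - (int x - int y')) mod int c"
    by (rule mod_diff_cong[OF refl])
  then show ?thesis using assms(1,2) by simp
qed

lemma sum_sub_mod: "y \<le> c \<Longrightarrow> (\<Sum>x<c. f (sub_mod c x y)) = (\<Sum>z<c. f z)"
proof -
  assume "y \<le> c"
  then have "inj_on (\<lambda>x. sub_mod c x y) {..<c}"
    using sub_mod_inj_left by (auto simp: inj_on_def)
  moreover have "(\<lambda>x. sub_mod c x y) ` {..<c} = {..<c}"
    using calculation sub_mod_less by (intro endo_inj_surj) auto
  ultimately show ?thesis
    using sum.reindex[of "\<lambda>x. sub_mod c x y" "{..<c}" f] by simp
qed

definition colour_lists :: "nat \<Rightarrow> nat \<Rightarrow> nat list set" where
  "colour_lists c n = {ys. set ys \<subseteq> {..<c} \<and> length ys = n}"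

lemma finite_colour_lists [simp]: "finite (colour_lists c n)"
  unfolding colour_lists_def by (rule finite_lists_length_eq) simp

lemma colour_lists_0 [simp]: "colour_lists c 0 = {[]}"
  by (auto simp: colour_lists_def)

lemma sum_colour_lists_add:
  "(\<Sum>ys\<in>colour_lists c (m + n). F ys) = (\<Sum>a\<in>colour_lists c m. \<Sum>b\<in>colour_lists c n. F (a @ b))"
proof -
  have image: "colour_lists c (m + n) = (\<lambda>(a, b). a @ b) ` (colour_lists c m \<times> colour_lists c n)"
  proof (intro equalityI subsetI)
    fix ys assume "ys \<in> colour_lists c (m + n)"
    then have "(take m ys, drop m ys) \<in> colour_lists c m \<times> colour_lists c n"
      by (auto simp: colour_lists_def dest: in_set_takeD in_set_dropD)
    then show "ys \<in> (\<lambda>(a, b). a @ b) ` (colour_lists c m \<times> colour_lists c n)"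
      by (metis (no_types, lifting) append_take_drop_id case_prod_conv image_eqI)
  qed (auto simp: colour_lists_def)
  have "inj_on (\<lambda>(a, b). a @ b) (colour_lists c m \<times> colour_lists c n)"
    by (auto simp: inj_on_def colour_lists_def)
  then show ?thesis
    unfolding image by (simp add: sum.reindex sum.cartesian_product split_def)
qed

lemma sum_colour_lists_1: "(\<Sum>ys\<in>colour_lists c (Suc 0). F ys) = (\<Sum>y<c. F [y])"
proof -
  have "colour_lists c (Suc 0) = (\<lambda>y. [y]) ` {..<c}"
    by (auto simp: colour_lists_def length_Suc_conv)
  then show ?thesis by (simp add: sum.reindex inj_on_def)
qed

lemma sum_colour_lists_2:
  "(\<Sum>ys\<in>colour_lists c (Suc (Suc 0)). F ys) = (\<Sum>y<c. \<Sum>y'<c. F [y, y'])"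
  using sum_colour_lists_add[where m = "Suc 0" and n = "Suc 0"] by (simp add: sum_colour_lists_1)

text \<open>The product functional is the pullback of \<open>\<psi>G \<otimes> \<psi>H\<close> along
  \<open>e\<^sub>(\<^sub>g\<^sub>,\<^sub>h\<^sub>)\<^sub>,\<^sub>x \<mapsto> \<Sum>\<^sub>y e\<^sub>g\<^sub>,\<^sub>y \<otimes> e\<^sub>h\<^sub>,\<^sub>x\<^sub>-\<^sub>y\<close>
  (colours taken mod c); expanding a word of length n gives one term per colour list ys.\<close>
definition left_word :: "(('a \<times> 'b) \<times> nat) list \<Rightarrow> nat list \<Rightarrow> ('a \<times> nat) list" where
  "left_word t ys = map (\<lambda>(((g, h), x), y). (g, y)) (zip t ys)"

definition right_word :: "nat \<Rightarrow> (('a \<times> 'b) \<times> nat) list \<Rightarrow> nat list \<Rightarrow> ('b \<times> nat) list" where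
  "right_word c t ys = map (\<lambda>(((g, h), x), y). (h, sub_mod c x y)) (zip t ys)"

definition prod_functional :: "nat \<Rightarrow> (('a \<times> nat) list \<Rightarrow> complex) \<Rightarrow> (('b \<times> nat) list \<Rightarrow> complex)
    \<Rightarrow> (('a \<times> 'b) \<times> nat) list \<Rightarrow> complex" where
  "prod_functional c \<psi>G \<psi>H t =
    (\<Sum>ys\<in>colour_lists c (length t). \<psi>G (left_word t ys) * \<psi>H (right_word c t ys))"

lemma left_word_simps [simp]:
  "left_word [] [] = []"
  "left_word (((g, h), x) # t) (y # ys) = (g, y) # left_word t ys"
  "length u = length a \<Longrightarrow> left_word (u @ t) (a @ b) = left_word u a @ left_word t b"
  by (simp_all add: left_word_def)

lemma right_word_simps [simp]:
  "right_word c [] [] = []"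
  "right_word c (((g, h), x) # t) (y # ys) = (h, sub_mod c x y) # right_word c t ys"
  "length u = length a \<Longrightarrow> right_word c (u @ t) (a @ b) = right_word c u a @ right_word c t b"
  by (simp_all add: right_word_def)

lemma prod_functional_append:
  "prod_functional c \<psi>G \<psi>H (u @ m @ w) =
    (\<Sum>a\<in>colour_lists c (length u). \<Sum>d\<in>colour_lists c (length w). \<Sum>b\<in>colour_lists c (length m).
       \<psi>G (left_word u a @ left_word m b @ left_word w d) *
       \<psi>H (right_word c u a @ right_word c m b @ right_word c w d))"
proof -
  have "prod_functional c \<psi>G \<psi>H (u @ m @ w) =
     (\<Sum>a\<in>colour_lists c (length u). \<Sum>b\<in>colour_lists c (length m). \<Sum>d\<in>colour_lists c (length w).
        \<psi>G (left_word u a @ left_word m b @ left_word w d) *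
        \<psi>H (right_word c u a @ right_word c m b @ right_word c w d))"
    unfolding prod_functional_def
    by (simp add: sum_colour_lists_add) (intro sum.cong refl, simp add: colour_lists_def)
  then show ?thesis by (simp add: sum.swap[where B = "colour_lists c (length w)"])
qed

lemma prod_functional_one_letter:
  "prod_functional c \<psi>G \<psi>H (u @ ((g, h), x) # w) =
    (\<Sum>a\<in>colour_lists c (length u). \<Sum>d\<in>colour_lists c (length w). \<Sum>y<c.
       \<psi>G (left_word u a @ (g, y) # left_word w d) *
       \<psi>H (right_word c u a @ (h, sub_mod c x y) # right_word c w d))"
  using prod_functional_append[of c \<psi>G \<psi>H u "[((g, h), x)]" w] by (simp add: sum_colour_lists_1)

lemma prod_functional_two_letters:
  "prod_functional c \<psi>G \<psi>H (u @ ((g, h), x) # ((g', h'), x') # w) =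
    (\<Sum>a\<in>colour_lists c (length u). \<Sum>d\<in>colour_lists c (length w). \<Sum>y<c. \<Sum>y'<c.
       \<psi>G (left_word u a @ (g, y) # (g', y') # left_word w d) *
       \<psi>H (right_word c u a @ (h, sub_mod c x y) # (h', sub_mod c x' y') # right_word c w d))"
  using prod_functional_append[of c \<psi>G \<psi>H u "[((g, h), x), ((g', h'), x')]" w]
  by (simp add: sum_colour_lists_2)

locale lc_functional_pair =
  G: lc_functional VG EG c \<psi>G + H: lc_functional VH EH c \<psi>H
  for VG :: "'a set" and EG and VH :: "'b set" and EH and c and \<psi>G and \<psi>H
begin

lemma set_left_right_word:
  assumes "set u \<subseteq> cart_V VG VH \<times> {..<c}" "a \<in> colour_lists c (length u)"
  shows "set (left_word u a) \<subseteq> VG \<times> {..<c}" "set (right_word c u a) \<subseteq> VH \<times> {..<c}"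
proof -
  have zip: "p \<in> set u \<and> y < c" if "(p, y) \<in> set (zip u a)" for p y
    using that assms(2) by (auto simp: colour_lists_def dest: set_zip_leftD set_zip_rightD)
  show "set (left_word u a) \<subseteq> VG \<times> {..<c}" "set (right_word c u a) \<subseteq> VH \<times> {..<c}"
    using assms(1) by (auto simp: left_word_def right_word_def cart_V_def sub_mod_less dest!: zip)
qed

text \<open>After fixing the colours of the letters around the two affected positions
  (as in \<open>prod_functional_append\<close>), each product relation reduces to one of
  the following identities, with \<open>A, D\<close> and \<open>A', D'\<close> the surrounding words in the factors.\<close>
context
  fixes A D :: "('a \<times> nat) list" and A' D' :: "('b \<times> nat) list"
  assumes A: "set A \<subseteq> VG \<times> {..<c}" and D: "set D \<subseteq> VG \<times> {..<c}"
    and A': "set A' \<subseteq> VH \<times> {..<c}" and D': "set D' \<subseteq> VH \<times> {..<c}"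
begin

lemma twisted_sum_colours:
  assumes "g \<in> VG" "h \<in> VH"
  shows "(\<Sum>x<c. \<Sum>y<c. \<psi>G (A @ (g, y) # D) * \<psi>H (A' @ (h, sub_mod c x y) # D')) =
    \<psi>G (A @ D) * \<psi>H (A' @ D')"
proof -
  have "(\<Sum>x<c. \<psi>H (A' @ (h, sub_mod c x y) # D')) = \<psi>H (A' @ D')" if "y < c" for y
    using sum_sub_mod[of y c "\<lambda>z. \<psi>H (A' @ (h, z) # D')"] that H.sum_colours[OF A' D' assms(2)]
    by simp
  then have "(\<Sum>x<c. \<Sum>y<c. \<psi>G (A @ (g, y) # D) * \<psi>H (A' @ (h, sub_mod c x y) # D')) =
      (\<Sum>y<c. \<psi>G (A @ (g, y) # D)) * \<psi>H (A' @ D')"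
    by (subst sum.swap) (simp add: sum_distrib_left[symmetric] sum_distrib_right)
  then show ?thesis using G.sum_colours[OF A D assms(1)] by simp
qed

lemma twisted_orthogonal:
  assumes "g \<in> VG" "h \<in> VH" "x < c" "x' < c" "x \<noteq> x'"
  shows "(\<Sum>y<c. \<Sum>y'<c. \<psi>G (A @ (g, y) # (g, y') # D) *
    \<psi>H (A' @ (h, sub_mod c x y) # (h, sub_mod c x' y') # D')) = 0"
proof (intro sum.neutral ballI)
  fix y y' assume "y \<in> {..<c}" "y' \<in> {..<c}"
  show "\<psi>G (A @ (g, y) # (g, y') # D) * \<psi>H (A' @ (h, sub_mod c x y) # (h, sub_mod c x' y') # D') = 0"
  proof (cases "y = y'")
    case True
    then have "sub_mod c x y \<noteq> sub_mod c x' y'"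
      using sub_mod_inj_left[of x c x' y] assms(3-5) \<open>y \<in> {..<c}\<close> by auto
    then show ?thesis
      using H.clash[OF A' D' assms(2,2) sub_mod_less[OF assms(3)] sub_mod_less[OF assms(4)]] by simp
  next
    case False
    then show ?thesis
      using G.clash[OF A D assms(1,1)] \<open>y \<in> {..<c}\<close> \<open>y' \<in> {..<c}\<close> by simp
  qed
qed

lemma twisted_adj_same_colour:
  assumes "g \<in> VG" "h \<in> VH" "g' \<in> VG" "h' \<in> VH" "(g = g' \<and> EH h h') \<or> (EG g g' \<and> h = h')" "x < c"
  shows "(\<Sum>y<c. \<Sum>y'<c. \<psi>G (A @ (g, y) # (g', y') # D) *
    \<psi>H (A' @ (h, sub_mod c x y) # (h', sub_mod c x y') # D')) = 0"
proof (intro sum.neutral ballI)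
  fix y y' assume "y \<in> {..<c}" "y' \<in> {..<c}"
  then have "((g = g' \<and> y \<noteq> y') \<or> (EG g g' \<and> y = y')) \<or>
      ((h = h' \<and> sub_mod c x y \<noteq> sub_mod c x y') \<or> (EH h h' \<and> sub_mod c x y = sub_mod c x y'))"
    using sub_mod_inj_right[of y c y' x] assms(5) by auto
  then show "\<psi>G (A @ (g, y) # (g', y') # D) * \<psi>H (A' @ (h, sub_mod c x y) # (h', sub_mod c x y') # D') = 0"
  proof
    assume "(g = g' \<and> y \<noteq> y') \<or> (EG g g' \<and> y = y')"
    then show ?thesis
      using G.clash[OF A D assms(1,3)] \<open>y \<in> {..<c}\<close> \<open>y' \<in> {..<c}\<close> by simp
  next
    assume "(h = h' \<and> sub_mod c x y \<noteq> sub_mod c x y') \<or> (EH h h' \<and> sub_mod c x y = sub_mod c x y')"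
    then show ?thesis
      using H.clash[OF A' D' assms(2,4) sub_mod_less[OF assms(6)] sub_mod_less[OF assms(6)]] by simp
  qed
qed

lemma twisted_adj_comm:
  assumes "g \<in> VG" "h \<in> VH" "g' \<in> VG" "h' \<in> VH" "(g = g' \<and> EH h h') \<or> (EG g g' \<and> h = h')"
    "x < c" "x' < c"
  shows "(\<Sum>y<c. \<Sum>y'<c. \<psi>G (A @ (g, y) # (g', y') # D) *
      \<psi>H (A' @ (h, sub_mod c x y) # (h', sub_mod c x' y') # D')) =
    (\<Sum>y<c. \<Sum>y'<c. \<psi>G (A @ (g', y) # (g, y') # D) *
      \<psi>H (A' @ (h', sub_mod c x' y) # (h, sub_mod c x y') # D'))"
proof -
  have swap_term: "\<psi>G (A @ (g, y) # (g', y') # D) * \<psi>H (A' @ (h, sub_mod c x y) # (h', sub_mod c x' y') # D') =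
      \<psi>G (A @ (g', y') # (g, y) # D) * \<psi>H (A' @ (h', sub_mod c x' y') # (h, sub_mod c x y) # D')"
    if "y \<in> {..<c}" "y' \<in> {..<c}" for y y'
  proof -
    have "\<psi>G (A @ (g, y) # (g', y') # D) = \<psi>G (A @ (g', y') # (g, y) # D)"
      using G.comm_if_eq_or_adj[OF A D assms(1,3)] that assms(5) by blast
    moreover have "\<psi>H (A' @ (h, sub_mod c x y) # (h', sub_mod c x' y') # D') =
        \<psi>H (A' @ (h', sub_mod c x' y') # (h, sub_mod c x y) # D')"
      using H.comm_if_eq_or_adj[OF A' D' assms(2,4) sub_mod_less[OF assms(6)] sub_mod_less[OF assms(7)]]
        assms(5) by blast
    ultimately show ?thesis by (simp only:)
  qed
  have "(\<Sum>y<c. \<Sum>y'<c. \<psi>G (A @ (g, y) # (g', y') # D) *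
      \<psi>H (A' @ (h, sub_mod c x y) # (h', sub_mod c x' y') # D')) =
    (\<Sum>y<c. \<Sum>y'<c. \<psi>G (A @ (g', y') # (g, y) # D) *
      \<psi>H (A' @ (h', sub_mod c x' y') # (h, sub_mod c x y) # D'))"
    by (intro sum.cong[OF refl] swap_term)
  also have "\<dots> = (\<Sum>y<c. \<Sum>y'<c. \<psi>G (A @ (g', y) # (g, y') # D) *
      \<psi>H (A' @ (h', sub_mod c x' y) # (h, sub_mod c x y') # D'))"
    by (rule sum.swap)
  finally show ?thesis .
qed

end

lemma prod_sum_colours:
  assumes "set u \<subseteq> cart_V VG VH \<times> {..<c}" "set w \<subseteq> cart_V VG VH \<times> {..<c}" "g \<in> VG" "h \<in> VH"
  shows "(\<Sum>x<c. prod_functional c \<psi>G \<psi>H (u @ ((g, h), x) # w)) = prod_functional c \<psi>G \<psi>H (u @ w)"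
proof -
  have "(\<Sum>x<c. prod_functional c \<psi>G \<psi>H (u @ ((g, h), x) # w)) =
    (\<Sum>a\<in>colour_lists c (length u). \<Sum>d\<in>colour_lists c (length w). \<Sum>x<c. \<Sum>y<c.
       \<psi>G (left_word u a @ (g, y) # left_word w d) *
       \<psi>H (right_word c u a @ (h, sub_mod c x y) # right_word c w d))"
    unfolding prod_functional_one_letter
    by (subst sum.swap) (intro sum.cong[OF refl] sum.swap)
  also have "\<dots> = (\<Sum>a\<in>colour_lists c (length u). \<Sum>d\<in>colour_lists c (length w).
       \<psi>G (left_word u a @ left_word w d) * \<psi>H (right_word c u a @ right_word c w d))"
    using assms by (intro sum.cong refl twisted_sum_colours set_left_right_word)
  also have "\<dots> = prod_functional c \<psi>G \<psi>H (u @ w)"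
    using prod_functional_append[of c \<psi>G \<psi>H u "[]" w] by simp
  finally show ?thesis .
qed

lemma prod_orthogonal:
  assumes "set u \<subseteq> cart_V VG VH \<times> {..<c}" "set w \<subseteq> cart_V VG VH \<times> {..<c}" "g \<in> VG" "h \<in> VH"
    "x < c" "x' < c" "x \<noteq> x'"
  shows "prod_functional c \<psi>G \<psi>H (u @ ((g, h), x) # ((g, h), x') # w) = 0"
  unfolding prod_functional_two_letters
  using assms by (intro sum.neutral ballI twisted_orthogonal set_left_right_word)

lemma prod_adj_same_colour:
  assumes "set u \<subseteq> cart_V VG VH \<times> {..<c}" "set w \<subseteq> cart_V VG VH \<times> {..<c}"
    "g \<in> VG" "h \<in> VH" "g' \<in> VG" "h' \<in> VH" "cart_E EG EH (g, h) (g', h')" "x < c"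
  shows "prod_functional c \<psi>G \<psi>H (u @ ((g, h), x) # ((g', h'), x) # w) = 0"
  unfolding prod_functional_two_letters
  using assms by (intro sum.neutral ballI twisted_adj_same_colour set_left_right_word) (simp_all add: cart_E_def)

lemma prod_adj_comm:
  assumes "set u \<subseteq> cart_V VG VH \<times> {..<c}" "set w \<subseteq> cart_V VG VH \<times> {..<c}"
    "g \<in> VG" "h \<in> VH" "g' \<in> VG" "h' \<in> VH" "cart_E EG EH (g, h) (g', h')" "x < c" "x' < c"
  shows "prod_functional c \<psi>G \<psi>H (u @ ((g, h), x) # ((g', h'), x') # w) =
    prod_functional c \<psi>G \<psi>H (u @ ((g', h'), x') # ((g, h), x) # w)"
  unfolding prod_functional_two_letters
  using assms by (intro sum.cong refl twisted_adj_comm set_left_right_word) (simp_all add: cart_E_def)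

lemma lc_functional_prod: "lc_functional (cart_V VG VH) (cart_E EG EH) c (prod_functional c \<psi>G \<psi>H)"
proof
  show "prod_functional c \<psi>G \<psi>H [] = 1"
    by (simp add: prod_functional_def G.empty_word H.empty_word)
qed (auto simp: cart_V_def intro: prod_sum_colours[unfolded cart_V_def] prod_orthogonal[unfolded cart_V_def]
    prod_adj_same_colour[unfolded cart_V_def] prod_adj_comm[unfolded cart_V_def])

end

lemma lc_functional_cart:
  "lc_functional VG EG c \<psi>G \<Longrightarrow> lc_functional VH EH c \<psi>H \<Longrightarrow>
    lc_functional (cart_V VG VH) (cart_E EG EH) c (prod_functional c \<psi>G \<psi>H)"
  by (intro lc_functional_pair.lc_functional_prod lc_functional_pair.intro)

section \<open>The chromatic number of a Cartesian product\<close>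

lemma lc_functional_chi_lc:
  assumes "finite V" "\<And>v. \<not> E v v"
  shows "\<exists>\<psi>. lc_functional V E (chi_lc V E) \<psi>"
  using ex_lc_functional[OF assms] unfolding chi_lc_def lc_nonzero_iff_functional by (rule LeastI_ex)

lemma chi_lc_le: "lc_functional V E c \<psi> \<Longrightarrow> chi_lc V E \<le> c"
  unfolding chi_lc_def lc_nonzero_iff_functional by (rule Least_le) blast

theorem mainTheorem7:
  fixes VG :: "'a set" and EG :: "'a \<Rightarrow> 'a \<Rightarrow> bool"
    and VH :: "'b set" and EH :: "'b \<Rightarrow> 'b \<Rightarrow> bool"
  assumes "is_graph VG EG" and "is_graph VH EH"
    and "VG \<noteq> {}" and "VH \<noteq> {}"
  shows "chi_lc (cart_V VG VH) (cart_E EG EH) = max (chi_lc VG EG) (chi_lc VH EH)"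
proof (rule antisym)
  let ?m = "max (chi_lc VG EG) (chi_lc VH EH)"
  obtain \<psi>G \<psi>H where "lc_functional VG EG (chi_lc VG EG) \<psi>G" "lc_functional VH EH (chi_lc VH EH) \<psi>H"
    using lc_functional_chi_lc assms(1,2) unfolding is_graph_def by metis
  then have "lc_functional VG EG ?m (\<lambda>t. if snd ` set t \<subseteq> {..<chi_lc VG EG} then \<psi>G t else 0)"
    and "lc_functional VH EH ?m (\<lambda>t. if snd ` set t \<subseteq> {..<chi_lc VH EH} then \<psi>H t else 0)"
    by (simp_all add: lc_functional_mono_colours)
  then show "chi_lc (cart_V VG VH) (cart_E EG EH) \<le> ?m"
    by (intro chi_lc_le[OF lc_functional_cart])
next
  let ?c = "chi_lc (cart_V VG VH) (cart_E EG EH)"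
  have "\<exists>\<psi>. lc_functional (cart_V VG VH) (cart_E EG EH) ?c \<psi>"
    using assms(1,2) by (intro lc_functional_chi_lc) (auto simp: is_graph_def cart_V_def cart_E_def)
  then obtain \<psi> where \<psi>: "lc_functional (cart_V VG VH) (cart_E EG EH) ?c \<psi>" ..
  obtain g0 h0 where "g0 \<in> VG" "h0 \<in> VH" using assms(3,4) by blast
  have "lc_functional VG EG ?c (\<lambda>t. \<psi> (map (apfst (\<lambda>g. (g, h0))) t))"
    by (rule lc_functional_pullback[OF \<psi>]) (use \<open>h0 \<in> VH\<close> in \<open>auto simp: cart_V_def cart_E_def\<close>)
  moreover have "lc_functional VH EH ?c (\<lambda>t. \<psi> (map (apfst (Pair g0)) t))"
    by (rule lc_functional_pullback[OF \<psi>]) (use \<open>g0 \<in> VG\<close> in \<open>auto simp: cart_V_def cart_E_def\<close>)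
  ultimately show "max (chi_lc VG EG) (chi_lc VH EH) \<le> ?c"
    by (auto dest: chi_lc_le)
qed

end
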